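(* Consider a congestion game in which each $\mathcal{A}_i$ is the set of all $k$-subsets of $\mathcal{F}$ and which admits a strict Nash equilibrium $a^*$ (with $\omega_i^*$ the point mass on $a_i^*$). Let $\epsilon>0$ and $U_\epsilon$ be as in Lemma 1, and let $M\ge|\log(\epsilon/(2kF))|$ be such that $U_M\subseteq U_\epsilon$. Suppose every player runs CongestEXP with expected-reward feedback and learning rate $\eta$, with initial values $\tilde y_i^0$ chosen so that $\omega^0\in U_M$. Then for every $i\in[n]$ and every $t$, \[ \|\omega_i^t-\omega_i^*\|_1\le 2kF\exp(-M-\eta\epsilon t). \]
   Context: Congestion game: $n$ players, facility set $\mathcal{F}$ with $F$ facilities, facility rewards $r^f\in[0,1]$ depending on a joint action only through the load of $f$; $r_i(a)=\sum_{f\in a_i}r^f(a)$, extended to mixed strategies by expectation under independent sampling. Strict Nash equilibrium: pure $a^*$ with $r_i(a_i^*,a_{-i}^* )>r_i(a_i,a_{-i}^* )$ for all $i$, $a_i\ne a_i^*$. Lemma 1: there are $\epsilon>0$ and a neighborhood $U_\epsilon$ of $a^*$ in joint mixed strategy space with $r_i(a_i^*,\tilde\omega_{-i})-r_i(a_i,\tilde\omega_{-i})\ge\epsilon$ for all $\tilde\omega\in U_\epsilon$, all $i$, $a_i\ne a_i^*$. CongestEXP with expected-reward feedback (player $i$, learning rate $\eta$): initial reals $\tilde y_i^0(f)$; at round $t\ge1$, $\tilde y_i^t(f)=\mathbb{E}_{a_{-i}\sim\omega_{-i}^t}[r^f(a_i,a_{-i})]$ for any $a_i\ni f$. Strategies: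 $\omega_i^t(a)\propto\prod_{f\in a}\exp(\eta\sum_{j=0}^{t}\tilde y_i^j(f))$ over $a\in\mathcal{A}_i$ (indexing so that $\omega^0$ is determined by $\tilde y^0$). Define $\tilde z_i^t(a_i)=\eta\sum_{j=0}^t(\sum_{f\in a_i}\tilde y_i^j(f)-\sum_{f\in a_i^*}\tilde y_i^j(f))$ and $U_M=\{\omega^t:\tilde z_i^t(a_i)\le -M\ \forall i,\ \forall a_i\ne a_i^*\}$. *)

theory Defs
  imports "HOL-Analysis.Analysis"
begin

text \<open>Players are 0,...,n-1; facilities form a finite set F; R f l in [0,1] is the
reward of facility f when its load is l.\<close>

definition actions :: "'f set \<Rightarrow> nat \<Rightarrow> 'f set set" where
  "actions F k = {a. a \<subseteq> F \<and> card a = k}"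

definition load :: "nat \<Rightarrow> 'f \<Rightarrow> (nat \<Rightarrow> 'f set) \<Rightarrow> nat" where
  "load n f a = card {j \<in> {..<n}. f \<in> a j}"

definition fac_reward :: "('f \<Rightarrow> nat \<Rightarrow> real) \<Rightarrow> nat \<Rightarrow> 'f \<Rightarrow> (nat \<Rightarrow> 'f set) \<Rightarrow> real" where
  "fac_reward R n f a = R f (load n f a)"

definition pure_reward :: "('f \<Rightarrow> nat \<Rightarrow> real) \<Rightarrow> nat \<Rightarrow> nat \<Rightarrow> (nat \<Rightarrow> 'f set) \<Rightarrow> real" where
  "pure_reward R n i a = (\<Sum>f\<in>a i. fac_reward R n f a)"

definition others :: "nat \<Rightarrow> nat \<Rightarrow> nat set" where
  "others n i = {..<n} - {i}"

definition dev_reward ::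
  "nat \<Rightarrow> 'f set \<Rightarrow> nat \<Rightarrow> ('f \<Rightarrow> nat \<Rightarrow> real) \<Rightarrow> nat \<Rightarrow> 'f set \<Rightarrow> (nat \<Rightarrow> 'f set \<Rightarrow> real) \<Rightarrow> real" where
  "dev_reward n F k R i b w =
     (\<Sum>a\<in>PiE (others n i) (\<lambda>_. actions F k).
        (\<Prod>j\<in>others n i. w j (a j)) * pure_reward R n i (a(i := b)))"

text \<open>Expected-reward feedback: E_{a_{-i} ~ w_{-i}} [r^f(a_i, a_{-i})] for any a_i containing f,
i.e. R f evaluated at load 1 + #{j /= i. f in a_j}.\<close>
definition feedback ::
  "nat \<Rightarrow> 'f set \<Rightarrow> nat \<Rightarrow> ('f \<Rightarrow> nat \<Rightarrow> real) \<Rightarrow> (nat \<Rightarrow> 'f set \<Rightarrow> real) \<Rightarrow> nat \<Rightarrow> 'f \<Rightarrow> real" where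
  "feedback n F k R w i f =
     (\<Sum>a\<in>PiE (others n i) (\<lambda>_. actions F k).
        (\<Prod>j\<in>others n i. w j (a j)) * R f (Suc (card {j \<in> others n i. f \<in> a j})))"

definition is_mixed :: "'f set \<Rightarrow> nat \<Rightarrow> ('f set \<Rightarrow> real) \<Rightarrow> bool" where
  "is_mixed F k s \<longleftrightarrow> (\<forall>a. 0 \<le> s a) \<and> (\<forall>a. a \<notin> actions F k \<longrightarrow> s a = 0)
      \<and> (\<Sum>a\<in>actions F k. s a) = 1"

definition mixed_profiles :: "nat \<Rightarrow> 'f set \<Rightarrow> nat \<Rightarrow> (nat \<Rightarrow> 'f set \<Rightarrow> real) set" where
  "mixed_profiles n F k = {w. \<forall>i<n. is_mixed F k (w i)}"

definition strict_NE ::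
  "nat \<Rightarrow> 'f set \<Rightarrow> nat \<Rightarrow> ('f \<Rightarrow> nat \<Rightarrow> real) \<Rightarrow> (nat \<Rightarrow> 'f set) \<Rightarrow> bool" where
  "strict_NE n F k R astar \<longleftrightarrow> (\<forall>i<n. astar i \<in> actions F k) \<and>
     (\<forall>i<n. \<forall>b\<in>actions F k. b \<noteq> astar i \<longrightarrow>
        pure_reward R n i (astar(i := b)) < pure_reward R n i astar)"

definition point_mass :: "(nat \<Rightarrow> 'f set) \<Rightarrow> nat \<Rightarrow> 'f set \<Rightarrow> real" where
  "point_mass astar i a = (if a = astar i then 1 else 0)"

definition softmax :: "'f set \<Rightarrow> nat \<Rightarrow> (nat \<Rightarrow> 'f \<Rightarrow> real) \<Rightarrow> nat \<Rightarrow> 'f set \<Rightarrow> real" where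
  "softmax F k Y i a = (if a \<in> actions F k
      then (\<Prod>f\<in>a. exp (Y i f)) / (\<Sum>b\<in>actions F k. \<Prod>f\<in>b. exp (Y i f)) else 0)"

definition U_M :: "nat \<Rightarrow> 'f set \<Rightarrow> nat \<Rightarrow> (nat \<Rightarrow> 'f set) \<Rightarrow> real \<Rightarrow> (nat \<Rightarrow> 'f set \<Rightarrow> real) set" where
  "U_M n F k astar M = {softmax F k Y | Y. \<forall>i<n. \<forall>a\<in>actions F k. a \<noteq> astar i \<longrightarrow>
      (\<Sum>f\<in>a. Y i f) - (\<Sum>f\<in>astar i. Y i f) \<le> - M}"

text \<open>Cumulative scores eta * sum_{j=0}^t y_i^j(f) of CongestEXP with expected-reward
feedback, where y^{t+1} is computed from the strategy profile w^t.\<close>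
fun cum_score ::
  "nat \<Rightarrow> 'f set \<Rightarrow> nat \<Rightarrow> ('f \<Rightarrow> nat \<Rightarrow> real) \<Rightarrow> real \<Rightarrow> (nat \<Rightarrow> 'f \<Rightarrow> real) \<Rightarrow> nat \<Rightarrow> nat \<Rightarrow> 'f \<Rightarrow> real" where
  "cum_score n F k R eta y0 0 = (\<lambda>i f. eta * y0 i f)"
| "cum_score n F k R eta y0 (Suc t) = (\<lambda>i f. cum_score n F k R eta y0 t i f
      + eta * feedback n F k R (softmax F k (cum_score n F k R eta y0 t)) i f)"

definition congestexp ::
  "nat \<Rightarrow> 'f set \<Rightarrow> nat \<Rightarrow> ('f \<Rightarrow> nat \<Rightarrow> real) \<Rightarrow> real \<Rightarrow> (nat \<Rightarrow> 'f \<Rightarrow> real) \<Rightarrow> nat \<Rightarrow> nat \<Rightarrow> 'f set \<Rightarrow> real" where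
  "congestexp n F k R eta y0 t = softmax F k (cum_score n F k R eta y0 t)"

end

theory Submission
  imports Defs
begin

text \<open>Every step of CongestEXP adds \<open>\<eta>\<close> times the expected reward to the cumulative score of an
action, so as long as the profile stays in \<open>U\<^sub>\<epsilon>\<close> the score gap of any action against \<open>a\<^sup>*\<^sub>i\<close>
drops by at least \<open>\<eta>\<epsilon>\<close> per round. The gaps start below \<open>-M\<close>, hence the profile never leaves
\<open>U\<^sub>M \<subseteq> U\<^sub>\<epsilon>\<close> and all gaps at round \<open>t\<close> are at most \<open>c = -M - \<eta>\<epsilon>t\<close>. Finally, a softmax over
\<open>k\<close>-subsets with all gaps at most \<open>c\<close> is \<open>2kF e\<^sup>c\<close>-close to the point mass: each action missing
a facility \<open>f \<in> a\<^sup>*\<^sub>i\<close> contains some \<open>g \<notin> a\<^sup>*\<^sub>i\<close>, and exchanging \<open>g\<close> for \<open>f\<close> multiplies its weight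
by at least \<open>e\<^sup>-\<^sup>c\<close>.\<close>

lemma finite_actions: "finite F \<Longrightarrow> finite (actions F k)"
  unfolding actions_def by (rule finite_subset[of _ "Pow F"]) auto

lemma finite_of_mem_actions: "finite F \<Longrightarrow> a \<in> actions F k \<Longrightarrow> finite a"
  unfolding actions_def by (auto intro: finite_subset)

lemma actions_eq_of_subset:
  assumes "finite F" "a \<in> actions F k" "b \<in> actions F k" "a \<subseteq> b"
  shows "a = b"
  using assms card_subset_eq[OF finite_of_mem_actions[OF assms(1,3)] assms(4)]
  unfolding actions_def by simp

lemma exchange_mem_actions:
  assumes "finite F" "a \<in> actions F k" "g \<in> a" "f \<in> F" "f \<notin> a"
  shows "insert f (a - {g}) \<in> actions F k"
proof -
  have "finite a" "card a = k" "a \<subseteq> F"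
    using assms finite_of_mem_actions unfolding actions_def by auto
  moreover have "card a > 0" using \<open>finite a\<close> assms(3) card_gt_0_iff by blast
  ultimately show ?thesis
    using assms(3-5) unfolding actions_def by (auto simp: card_Diff_singleton)
qed

lemma sum_feedback_eq_dev_reward:
  assumes "i < n"
  shows "(\<Sum>f\<in>b. feedback n F k R w i f) = dev_reward n F k R i b w"
proof -
  have load: "load n f (a(i := b)) = Suc (card {j \<in> others n i. f \<in> a j})" if "f \<in> b" for f a
  proof -
    have "{j \<in> {..<n}. f \<in> (a(i := b)) j} = insert i {j \<in> others n i. f \<in> a j}"
      using that assms by (auto simp: others_def)
    then show ?thesis unfolding load_def by (simp add: others_def)
  qed
  show ?thesis
    unfolding feedback_def dev_reward_def pure_reward_def fac_reward_def
    by (subst sum.swap) (simp add: sum_distrib_left load)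
qed

lemma cum_score_Suc_sum:
  assumes "i < n"
  shows "(\<Sum>f\<in>b. cum_score n F k R eta y0 (Suc t) i f)
    = (\<Sum>f\<in>b. cum_score n F k R eta y0 t i f)
      + eta * dev_reward n F k R i b (softmax F k (cum_score n F k R eta y0 t))"
  by (simp add: sum.distrib sum_distrib_left[symmetric] sum_feedback_eq_dev_reward[OF assms])

lemma softmax_nonneg: "0 \<le> softmax F k Y i a"
  unfolding softmax_def by (simp add: prod_nonneg sum_nonneg)

lemma softmax_normalizer_pos:
  fixes Y :: "nat \<Rightarrow> 'f \<Rightarrow> real"
  assumes "finite F" "a \<in> actions F k"
  shows "0 < (\<Sum>b\<in>actions F k. \<Prod>f\<in>b. exp (Y i f))"
  by (rule sum_pos2[OF finite_actions[OF assms(1)] assms(2)]) (auto simp: prod_pos prod_nonneg)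

lemma softmax_pos:
  assumes "finite F" "a \<in> actions F k"
  shows "0 < softmax F k Y i a"
  using softmax_normalizer_pos[OF assms, of Y i] assms(2) by (simp add: softmax_def prod_pos)

lemma sum_softmax:
  assumes "finite F" "a \<in> actions F k"
  shows "(\<Sum>b\<in>actions F k. softmax F k Y i b) = 1"
  using softmax_normalizer_pos[OF assms, of Y i] by (simp add: softmax_def sum_divide_distrib[symmetric])

lemma softmax_ratio:
  assumes "finite F" "a \<in> actions F k" "b \<in> actions F k"
  shows "softmax F k Y i a / softmax F k Y i b = exp ((\<Sum>f\<in>a. Y i f) - (\<Sum>f\<in>b. Y i f))"
  using softmax_normalizer_pos[OF assms(1,2), of Y i] assms
  by (simp add: softmax_def exp_diff exp_sum finite_of_mem_actions)

lemma softmax_eq_imp_gap_eq: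
  assumes "finite F" "a \<in> actions F k" "b \<in> actions F k" "softmax F k Y = softmax F k Y'"
  shows "(\<Sum>f\<in>a. Y i f) - (\<Sum>f\<in>b. Y i f) = (\<Sum>f\<in>a. Y' i f) - (\<Sum>f\<in>b. Y' i f)"
  using softmax_ratio[OF assms(1-3), of Y i] softmax_ratio[OF assms(1-3), of Y' i] assms(4)
  by simp

lemma softmax_mem_U_M_iff:
  assumes "finite F" "\<forall>i<n. astar i \<in> actions F k"
  shows "softmax F k Y \<in> U_M n F k astar M \<longleftrightarrow>
    (\<forall>i<n. \<forall>a\<in>actions F k. a \<noteq> astar i \<longrightarrow> (\<Sum>f\<in>a. Y i f) - (\<Sum>f\<in>astar i. Y i f) \<le> - M)"
proof
  assume "softmax F k Y \<in> U_M n F k astar M"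
  then obtain Y' where eq: "softmax F k Y = softmax F k Y'"
    and gap: "\<forall>i<n. \<forall>a\<in>actions F k. a \<noteq> astar i \<longrightarrow> (\<Sum>f\<in>a. Y' i f) - (\<Sum>f\<in>astar i. Y' i f) \<le> - M"
    unfolding U_M_def by auto
  show "\<forall>i<n. \<forall>a\<in>actions F k. a \<noteq> astar i \<longrightarrow> (\<Sum>f\<in>a. Y i f) - (\<Sum>f\<in>astar i. Y i f) \<le> - M"
  proof (intro allI impI ballI)
    fix i a assume "i < n" "a \<in> actions F k" "a \<noteq> astar i"
    with gap show "(\<Sum>f\<in>a. Y i f) - (\<Sum>f\<in>astar i. Y i f) \<le> - M"
      unfolding softmax_eq_imp_gap_eq[OF assms(1) \<open>a \<in> actions F k\<close> assms(2)[rule_format, OF \<open>i < n\<close>] eq]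
      by blast
  qed
qed (auto simp: U_M_def)

lemma softmax_exchange:
  assumes "finite F" "a \<in> actions F k" "g \<in> a" "f \<in> F" "f \<notin> a"
  shows "softmax F k Y i a = exp (Y i g - Y i f) * softmax F k Y i (insert f (a - {g}))"
proof -
  let ?b = "insert f (a - {g})"
  have b: "?b \<in> actions F k" using exchange_mem_actions[OF assms] .
  have "finite a" using finite_of_mem_actions[OF assms(1,2)] .
  then have "(\<Sum>h\<in>a. Y i h) - (\<Sum>h\<in>?b. Y i h) = Y i g - Y i f"
    using assms(3,5) by (simp add: sum.remove[of a g])
  then show ?thesis
    using softmax_ratio[OF assms(1,2) b, of Y i] softmax_pos[OF assms(1) b, of Y i]
    by (simp add: divide_eq_eq)
qed

lemma l1_dist_point_mass:
  fixes p :: "'a \<Rightarrow> real"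
  assumes "finite A" "x \<in> A" "\<forall>a\<in>A. 0 \<le> p a" "sum p A = 1"
  shows "(\<Sum>a\<in>A. \<bar>p a - (if a = x then 1 else 0)\<bar>) = 2 * (\<Sum>a\<in>A - {x}. p a)"
proof -
  have total: "p x + (\<Sum>a\<in>A - {x}. p a) = 1"
    using assms by (simp add: sum.remove)
  have "(\<Sum>a\<in>A. \<bar>p a - (if a = x then 1 else 0)\<bar>) = \<bar>p x - 1\<bar> + (\<Sum>a\<in>A - {x}. p a)"
    using assms by (simp add: sum.remove)
  also have "\<bar>p x - 1\<bar> = (\<Sum>a\<in>A - {x}. p a)"
    using total sum_nonneg[of "A - {x}" p] assms(3) by (auto simp: abs_if)
  finally show ?thesis by simp
qed

lemma exchange_score_gap_le:
  fixes Y :: "nat \<Rightarrow> 'f \<Rightarrow> real"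
  assumes "finite F" "a0 \<in> actions F k"
    and gap: "\<forall>a\<in>actions F k. a \<noteq> a0 \<longrightarrow> (\<Sum>f\<in>a. Y i f) - (\<Sum>f\<in>a0. Y i f) \<le> c"
    and "f \<in> a0" "g \<in> F" "g \<notin> a0"
  shows "Y i g - Y i f \<le> c"
proof -
  let ?a = "insert g (a0 - {f})"
  have "finite a0" using finite_of_mem_actions[OF assms(1,2)] .
  have "?a \<in> actions F k" "?a \<noteq> a0"
    using exchange_mem_actions[OF assms(1,2,4-6)] assms(6) by auto
  then have "(\<Sum>h\<in>?a. Y i h) - (\<Sum>h\<in>a0. Y i h) \<le> c" by (rule gap[rule_format])
  moreover have "(\<Sum>h\<in>?a. Y i h) = Y i g + (\<Sum>h\<in>a0 - {f}. Y i h)"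
    using \<open>finite a0\<close> assms(6) by simp
  moreover have "(\<Sum>h\<in>a0. Y i h) = Y i f + (\<Sum>h\<in>a0 - {f}. Y i h)"
    using \<open>finite a0\<close> assms(4) by (rule sum.remove)
  ultimately show ?thesis by linarith
qed

text \<open>The exchange \<open>a \<mapsto> insert f (a - {g})\<close> is injective on the actions containing \<open>g\<close> but
not \<open>f\<close>, so their total softmax mass is at most \<open>e\<^sup>c\<close> times a subprobability.\<close>

lemma sum_softmax_exchangeable_le:
  assumes "finite F" "f \<in> F" and gap: "Y i g - Y i f \<le> c"
  shows "(\<Sum>a\<in>{a\<in>actions F k. f \<notin> a \<and> g \<in> a}. softmax F k Y i a) \<le> exp c"
proof -
  define S where "S = {a\<in>actions F k. f \<notin> a \<and> g \<in> a}"
  define exch where "exch a = insert f (a - {g})" for a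
  have "inj_on exch S"
    by (rule inj_onI) (auto simp: S_def exch_def insert_Diff_if insert_eq_iff)
  have exch_S: "exch ` S \<subseteq> actions F k"
    using exchange_mem_actions[OF assms(1) _ _ assms(2)] by (auto simp: S_def exch_def)
  have "(\<Sum>a\<in>S. softmax F k Y i a) \<le> (\<Sum>a\<in>S. exp c * softmax F k Y i (exch a))"
  proof (rule sum_mono)
    fix a assume "a \<in> S"
    then have "softmax F k Y i a = exp (Y i g - Y i f) * softmax F k Y i (exch a)"
      using softmax_exchange[OF assms(1) _ _ assms(2)] by (simp add: S_def exch_def)
    also have "\<dots> \<le> exp c * softmax F k Y i (exch a)"
      using gap by (intro mult_right_mono softmax_nonneg) simp
    finally show "softmax F k Y i a \<le> exp c * softmax F k Y i (exch a)" .
  qed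
  also have "\<dots> = exp c * (\<Sum>b\<in>exch ` S. softmax F k Y i b)"
    using \<open>inj_on exch S\<close> by (simp add: sum.reindex sum_distrib_left)
  also have "\<dots> \<le> exp c * (\<Sum>b\<in>actions F k. softmax F k Y i b)"
    using exch_S by (intro mult_left_mono sum_mono2 finite_actions assms(1) softmax_nonneg) auto
  also have "\<dots> \<le> exp c"
    by (cases "actions F k = {}") (auto simp: sum_softmax[OF assms(1)])
  finally show ?thesis unfolding S_def .
qed

lemma sum_softmax_missing_le:
  assumes "finite F" "a0 \<in> actions F k"
    and gap: "\<forall>a\<in>actions F k. a \<noteq> a0 \<longrightarrow> (\<Sum>f\<in>a. Y i f) - (\<Sum>f\<in>a0. Y i f) \<le> c"
    and f: "f \<in> a0"
  shows "(\<Sum>a\<in>{a\<in>actions F k. f \<notin> a}. softmax F k Y i a) \<le> real (card (F - a0)) * exp c"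
proof -
  let ?A = "{a\<in>actions F k. f \<notin> a}"
  have fF: "f \<in> F" using assms(2) f unfolding actions_def by auto
  have "(\<Sum>a\<in>?A. softmax F k Y i a)
      \<le> (\<Sum>a\<in>?A. \<Sum>g\<in>F - a0. if g \<in> a then softmax F k Y i a else 0)"
  proof (rule sum_mono)
    fix a assume a: "a \<in> ?A"
    then have "\<not> a \<subseteq> a0" using actions_eq_of_subset[OF assms(1) _ assms(2)] f by blast
    then obtain g where "g \<in> a" "g \<notin> a0" by auto
    moreover have "a \<subseteq> F" using a unfolding actions_def by auto
    ultimately show "softmax F k Y i a \<le> (\<Sum>g\<in>F - a0. if g \<in> a then softmax F k Y i a else 0)"
      using member_le_sum[of g "F - a0" "\<lambda>g. if g \<in> a then softmax F k Y i a else 0"]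
      by (auto simp: softmax_nonneg assms(1))
  qed
  also have "\<dots> = (\<Sum>g\<in>F - a0. \<Sum>a\<in>?A. if g \<in> a then softmax F k Y i a else 0)"
    by (rule sum.swap)
  also have "\<dots> = (\<Sum>g\<in>F - a0. \<Sum>a\<in>{a\<in>actions F k. f \<notin> a \<and> g \<in> a}. softmax F k Y i a)"
    by (rule sum.cong[OF refl]) (simp add: sum.inter_filter[symmetric] finite_actions assms(1))
  also have "\<dots> \<le> (\<Sum>g\<in>F - a0. exp c)"
  proof (rule sum_mono)
    fix g assume "g \<in> F - a0"
    then have "Y i g - Y i f \<le> c"
      using exchange_score_gap_le[OF assms(1,2), of Y i c f g] gap f by blast
    then show "(\<Sum>a\<in>{a\<in>actions F k. f \<notin> a \<and> g \<in> a}. softmax F k Y i a) \<le> exp c"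
      by (rule sum_softmax_exchangeable_le[OF assms(1) fF])
  qed
  finally show ?thesis by simp
qed

lemma sum_off_le_sum_missing:
  fixes p :: "'f set \<Rightarrow> real"
  assumes "finite F" "a0 \<in> actions F k" "\<forall>a. 0 \<le> p a"
  shows "(\<Sum>a\<in>actions F k - {a0}. p a) \<le> (\<Sum>f\<in>a0. \<Sum>a\<in>{a\<in>actions F k. f \<notin> a}. p a)"
proof -
  have "(\<Sum>a\<in>actions F k - {a0}. p a) \<le> (\<Sum>a\<in>actions F k - {a0}. \<Sum>f\<in>a0. if f \<notin> a then p a else 0)"
  proof (rule sum_mono)
    fix a assume a: "a \<in> actions F k - {a0}"
    then have "\<not> a0 \<subseteq> a" using actions_eq_of_subset[OF assms(1,2)] by blast
    then obtain f where "f \<in> a0" "f \<notin> a" by auto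
    then show "p a \<le> (\<Sum>f\<in>a0. if f \<notin> a then p a else 0)"
      using member_le_sum[of f a0 "\<lambda>f. if f \<notin> a then p a else 0"]
        finite_of_mem_actions[OF assms(1,2)] assms(3) by auto
  qed
  also have "\<dots> \<le> (\<Sum>f\<in>a0. \<Sum>a\<in>actions F k. if f \<notin> a then p a else 0)"
    by (subst sum.swap) (intro sum_mono sum_mono2; auto simp: finite_actions assms)
  also have "\<dots> = (\<Sum>f\<in>a0. \<Sum>a\<in>{a\<in>actions F k. f \<notin> a}. p a)"
    by (simp add: sum.inter_filter finite_actions assms(1))
  finally show ?thesis .
qed

lemma softmax_l1_dist_le:
  assumes "finite F" "a0 \<in> actions F k"
    and gap: "\<forall>a\<in>actions F k. a \<noteq> a0 \<longrightarrow> (\<Sum>f\<in>a. Y i f) - (\<Sum>f\<in>a0. Y i f) \<le> c"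
  shows "(\<Sum>a\<in>actions F k. \<bar>softmax F k Y i a - (if a = a0 then 1 else 0)\<bar>)
    \<le> 2 * real k * real (card F) * exp c"
proof -
  have a0: "card a0 = k" "a0 \<subseteq> F" using assms(2) unfolding actions_def by auto
  have "(\<Sum>a\<in>actions F k - {a0}. softmax F k Y i a)
      \<le> (\<Sum>f\<in>a0. \<Sum>a\<in>{a\<in>actions F k. f \<notin> a}. softmax F k Y i a)"
    using sum_off_le_sum_missing[OF assms(1,2)] softmax_nonneg by blast
  also have "\<dots> \<le> (\<Sum>f\<in>a0. real (card (F - a0)) * exp c)"
    using sum_softmax_missing_le[OF assms(1,2), of Y i c] gap by (intro sum_mono) blast
  also have "\<dots> = real k * real (card (F - a0)) * exp c"
    using a0 by simp
  also have "\<dots> \<le> real k * real (card F) * exp c"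
    using card_mono[OF assms(1) Diff_subset, of a0] by (intro mult_right_mono mult_left_mono) auto
  finally have "(\<Sum>a\<in>actions F k - {a0}. softmax F k Y i a) \<le> real k * real (card F) * exp c" .
  moreover have "(\<Sum>a\<in>actions F k. \<bar>softmax F k Y i a - (if a = a0 then 1 else 0)\<bar>)
      = 2 * (\<Sum>a\<in>actions F k - {a0}. softmax F k Y i a)"
    using softmax_nonneg sum_softmax[OF assms(1,2)]
    by (intro l1_dist_point_mass[OF finite_actions[OF assms(1)] assms(2)]) auto
  ultimately show ?thesis by simp
qed

lemma cum_score_gap_le:
  assumes "finite F" "eps \<ge> 0" "eta \<ge> 0"
    and astar: "\<forall>i<n. astar i \<in> actions F k"
    and gap: "\<forall>w\<in>U_M n F k astar M. \<forall>i<n. \<forall>b\<in>actions F k. b \<noteq> astar i \<longrightarrow>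
                dev_reward n F k R i (astar i) w - dev_reward n F k R i b w \<ge> eps"
    and init: "congestexp n F k R eta y0 0 \<in> U_M n F k astar M"
  shows "\<forall>i<n. \<forall>a\<in>actions F k. a \<noteq> astar i \<longrightarrow>
    (\<Sum>f\<in>a. cum_score n F k R eta y0 t i f) - (\<Sum>f\<in>astar i. cum_score n F k R eta y0 t i f)
      \<le> - M - eta * eps * real t"
proof (induction t)
  case 0
  then show ?case
    using init softmax_mem_U_M_iff[OF assms(1) astar] by (simp add: congestexp_def)
next
  case (Suc t)
  let ?w = "softmax F k (cum_score n F k R eta y0 t)"
  have "0 \<le> eta * eps * real t" using assms(2,3) by simp
  with Suc.IH have "\<forall>i<n. \<forall>a\<in>actions F k. a \<noteq> astar i \<longrightarrow>
      (\<Sum>f\<in>a. cum_score n F k R eta y0 t i f) - (\<Sum>f\<in>astar i. cum_score n F k R eta y0 t i f) \<le> - M"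
    by fastforce
  then have "?w \<in> U_M n F k astar M"
    using softmax_mem_U_M_iff[OF assms(1) astar] by blast
  have descent: "eta * dev_reward n F k R i a ?w \<le> eta * dev_reward n F k R i (astar i) ?w - eta * eps"
    if "i < n" "a \<in> actions F k" "a \<noteq> astar i" for i a
  proof -
    have "eps \<le> dev_reward n F k R i (astar i) ?w - dev_reward n F k R i a ?w"
      using gap \<open>?w \<in> U_M n F k astar M\<close> that by blast
    then have "eta * eps \<le> eta * (dev_reward n F k R i (astar i) ?w - dev_reward n F k R i a ?w)"
      using assms(3) by (rule mult_left_mono)
    then show ?thesis by (simp add: right_diff_distrib)
  qed
  show ?case
  proof (intro allI impI ballI)
    fix i a assume ia: "i < n" "a \<in> actions F k" "a \<noteq> astar i"
    have "(\<Sum>f\<in>a. cum_score n F k R eta y0 t i f) - (\<Sum>f\<in>astar i. cum_score n F k R eta y0 t i f)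
        \<le> - M - eta * eps * real t"
      using Suc.IH ia by blast
    moreover note descent[OF ia]
    moreover have "eta * eps * real (Suc t) = eta * eps * real t + eta * eps"
      by (simp add: distrib_left)
    ultimately show
      "(\<Sum>f\<in>a. cum_score n F k R eta y0 (Suc t) i f) - (\<Sum>f\<in>astar i. cum_score n F k R eta y0 (Suc t) i f)
        \<le> - M - eta * eps * real (Suc t)"
      unfolding cum_score_Suc_sum[OF ia(1)] by linarith
  qed
qed

theorem theorem2:
  fixes n k :: nat and F :: "'f set" and R :: "'f \<Rightarrow> nat \<Rightarrow> real"
    and astar :: "nat \<Rightarrow> 'f set" and eps M eta :: real
    and Ueps :: "(nat \<Rightarrow> 'f set \<Rightarrow> real) set" and y0 :: "nat \<Rightarrow> 'f \<Rightarrow> real"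
  assumes finF: "finite F"
    and Rrange: "\<forall>f\<in>F. \<forall>l. 0 \<le> R f l \<and> R f l \<le> 1"
    and NE: "strict_NE n F k R astar"
    and eps_pos: "eps > 0"
    and Ueps_sub: "Ueps \<subseteq> mixed_profiles n F k"
    and Ueps_gap: "\<forall>w\<in>Ueps. \<forall>i<n. \<forall>b\<in>actions F k. b \<noteq> astar i \<longrightarrow>
                     dev_reward n F k R i (astar i) w - dev_reward n F k R i b w \<ge> eps"
    and M_ge: "M \<ge> \<bar>ln (eps / (2 * real k * real (card F)))\<bar>"
    and UM_sub: "U_M n F k astar M \<subseteq> Ueps"
    and eta_pos: "eta > 0"
    and init: "congestexp n F k R eta y0 0 \<in> U_M n F k astar M"
  shows "\<forall>i<n. \<forall>t::nat.
           (\<Sum>a\<in>actions F k. \<bar>congestexp n F k R eta y0 t i a - point_mass astar i a\<bar>)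
             \<le> 2 * real k * real (card F) * exp (- M - eta * eps * real t)"
proof (intro allI impI)
  fix i t assume "i < n"
  have astar: "\<forall>i<n. astar i \<in> actions F k" using NE unfolding strict_NE_def by blast
  have gap: "\<forall>w\<in>U_M n F k astar M. \<forall>i<n. \<forall>b\<in>actions F k. b \<noteq> astar i \<longrightarrow>
      dev_reward n F k R i (astar i) w - dev_reward n F k R i b w \<ge> eps"
    using Ueps_gap UM_sub by blast
  have "\<forall>a\<in>actions F k. a \<noteq> astar i \<longrightarrow>
      (\<Sum>f\<in>a. cum_score n F k R eta y0 t i f) - (\<Sum>f\<in>astar i. cum_score n F k R eta y0 t i f)
        \<le> - M - eta * eps * real t"
    using cum_score_gap_le[OF finF less_imp_le[OF eps_pos] less_imp_le[OF eta_pos] astar gap init]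
      \<open>i < n\<close> by blast
  then have "(\<Sum>a\<in>actions F k. \<bar>softmax F k (cum_score n F k R eta y0 t) i a - (if a = astar i then 1 else 0)\<bar>)
      \<le> 2 * real k * real (card F) * exp (- M - eta * eps * real t)"
    using softmax_l1_dist_le[OF finF astar[rule_format, OF \<open>i < n\<close>], of "cum_score n F k R eta y0 t" i]
    by blast
  then show "(\<Sum>a\<in>actions F k. \<bar>congestexp n F k R eta y0 t i a - point_mass astar i a\<bar>)
      \<le> 2 * real k * real (card F) * exp (- M - eta * eps * real t)"
    unfolding congestexp_def point_mass_def .
qed

end
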